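(* Let $X$ be an $L$-space with a convexifying operator $P$, $(T,r)$ a metric compact, $\mu$ a Borel measure on $T$, $\omega$ a modulus of continuity, $t\in T$, and $Q\subset T$ a compact set with $\mu(Q)>0$. Then $$\sup_{f\in H^\omega(T,X),\ \int_Q f\,d\mu=\theta}h_X(P(f(t)),\theta)\le\tfrac{1}{\mu(Q)}\int_Q\omega(r(t,s))\,d\mu(s).$$ If $X$ is isotropic and $X^{\rm inv}\cap X^{\rm c}\ne\{\theta\}$, then the inequality becomes an equality.
   Context: Semilinear space: a set $X$ with addition and multiplication by reals such that for all $x,y,z\in X$, $\alpha,\beta\in\mathbb R$: $x+y=y+x$; $x+(y+z)=(x+y)+z$; there is $\theta$ with $x+\theta=x$; $\alpha(x+y)=\alpha x+\alpha y$; $\alpha(\beta x)=(\alpha\beta)x$; $1\cdot x=x$, $0\cdot x=\theta$. $x$ is convex if $(\alpha+\beta)x=\alpha x+\beta x$ for all $\alpha,\beta\ge0$ ($X^{\rm c}$: convex elements); $x$ is invertible if $x+x'=\theta$ for some $x'$ ($X^{\rm inv}$: invertible elements). An $L$-space is a semilinear space with a complete separable metric $h_X$ satisfying $h_X(\alpha x,\alpha y)=|\alpha|h_X(x,y)$ and $h_X(x+z,y+z)\le h_X(x,y)$; isotropic if always equality. A convexifying operator is a surjective $P\colon X\to X^{\rm c}$ with $h_X(P(x),P(y))\le h_X(x,y)$, $P\circ P=P$, $P(\alpha x+\beta y)=\alpha P(x)+\beta P(y)$ for all $x,y,\alpha,\beta$. Integral: $f\colon T\to X$ is measurable if $h_X(f(\cdot),x)$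 is Borel measurable for all $x$; for simple bounded $f$ with values $f_i$ on disjoint Borel sets $T_i$ covering $T$, $\int_Tf\,d\mu=\sum_iP(f_i)\mu(T_i)$; for bounded measurable $f$, $\int_Tf\,d\mu$ is the limit of integrals of any uniformly bounded sequence of simple functions converging to $f$ a.e.; $\int_Qf\,d\mu=\int_T\chi_Qf\,d\mu$. Modulus of continuity: non-decreasing continuous $\omega\colon[0,\infty)\to[0,\infty)$, $\omega(0)=0$, $\omega(a+b)\le\omega(a)+\omega(b)$; $H^\omega(T,X)=\{f: h_X(f(s),f(t))\le\omega(r(s,t))\ \forall s,t\}$. *)

theory Defs
  imports "HOL-Probability.Probability"
begin

definition semilinear_space ::
  "('x \<Rightarrow> 'x \<Rightarrow> 'x) \<Rightarrow> (real \<Rightarrow> 'x \<Rightarrow> 'x) \<Rightarrow> 'x \<Rightarrow> bool" where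
  "semilinear_space add smul \<theta> \<longleftrightarrow>
     (\<forall>x y. add x y = add y x) \<and>
     (\<forall>x y z. add x (add y z) = add (add x y) z) \<and>
     (\<forall>x. add x \<theta> = x) \<and>
     (\<forall>a x y. smul a (add x y) = add (smul a x) (smul a y)) \<and>
     (\<forall>a b x. smul a (smul b x) = smul (a * b) x) \<and>
     (\<forall>x. smul 1 x = x) \<and>
     (\<forall>x. smul 0 x = \<theta>)"

definition convex_elems :: "('x \<Rightarrow> 'x \<Rightarrow> 'x) \<Rightarrow> (real \<Rightarrow> 'x \<Rightarrow> 'x) \<Rightarrow> 'x set" where
  "convex_elems add smul =
     {x. \<forall>a b. a \<ge> 0 \<longrightarrow> b \<ge> 0 \<longrightarrow> smul (a + b) x = add (smul a x) (smul b x)}"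

definition invertible_elems :: "('x \<Rightarrow> 'x \<Rightarrow> 'x) \<Rightarrow> 'x \<Rightarrow> 'x set" where
  "invertible_elems add \<theta> = {x. \<exists>x'. add x x' = \<theta>}"

definition is_metric :: "('x \<Rightarrow> 'x \<Rightarrow> real) \<Rightarrow> bool" where
  "is_metric h \<longleftrightarrow>
     (\<forall>x y. h x y \<ge> 0) \<and> (\<forall>x y. h x y = 0 \<longleftrightarrow> x = y) \<and>
     (\<forall>x y. h x y = h y x) \<and> (\<forall>x y z. h x z \<le> h x y + h y z)"

definition metric_complete :: "('x \<Rightarrow> 'x \<Rightarrow> real) \<Rightarrow> bool" where
  "metric_complete h \<longleftrightarrow>
     (\<forall>u :: nat \<Rightarrow> 'x. (\<forall>e>0. \<exists>N. \<forall>m\<ge>N. \<forall>n\<ge>N. h (u m) (u n) < e)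
        \<longrightarrow> (\<exists>l. (\<lambda>n. h (u n) l) \<longlonglongrightarrow> 0))"

definition metric_separable :: "('x \<Rightarrow> 'x \<Rightarrow> real) \<Rightarrow> bool" where
  "metric_separable h \<longleftrightarrow>
     (\<exists>D. countable D \<and> (\<forall>x. \<forall>e>0. \<exists>d\<in>D. h x d < e))"

definition L_space ::
  "('x \<Rightarrow> 'x \<Rightarrow> 'x) \<Rightarrow> (real \<Rightarrow> 'x \<Rightarrow> 'x) \<Rightarrow> 'x \<Rightarrow> ('x \<Rightarrow> 'x \<Rightarrow> real) \<Rightarrow> bool" where
  "L_space add smul \<theta> h \<longleftrightarrow>
     semilinear_space add smul \<theta> \<and> is_metric h \<and> metric_complete h \<and> metric_separable h \<and>
     (\<forall>a x y. h (smul a x) (smul a y) = \<bar>a\<bar> * h x y) \<and>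
     (\<forall>x y z. h (add x z) (add y z) \<le> h x y)"

definition isotropic :: "('x \<Rightarrow> 'x \<Rightarrow> 'x) \<Rightarrow> ('x \<Rightarrow> 'x \<Rightarrow> real) \<Rightarrow> bool" where
  "isotropic add h \<longleftrightarrow> (\<forall>x y z. h (add x z) (add y z) = h x y)"

definition convexifying_operator ::
  "('x \<Rightarrow> 'x \<Rightarrow> 'x) \<Rightarrow> (real \<Rightarrow> 'x \<Rightarrow> 'x) \<Rightarrow> ('x \<Rightarrow> 'x \<Rightarrow> real) \<Rightarrow> ('x \<Rightarrow> 'x) \<Rightarrow> bool" where
  "convexifying_operator add smul h P \<longleftrightarrow>
     range P = convex_elems add smul \<and>
     (\<forall>x y. h (P x) (P y) \<le> h x y) \<and>
     (\<forall>x. P (P x) = P x) \<and>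
     (\<forall>x y a b. P (add (smul a x) (smul b y)) = add (smul a (P x)) (smul b (P y)))"

definition sumX :: "('x \<Rightarrow> 'x \<Rightarrow> 'x) \<Rightarrow> 'x \<Rightarrow> ('v \<Rightarrow> 'x) \<Rightarrow> 'v set \<Rightarrow> 'x" where
  "sumX add \<theta> g A = Finite_Set.fold (\<lambda>v acc. add (g v) acc) \<theta> A"

definition simple_X :: "'t measure \<Rightarrow> ('t \<Rightarrow> 'x) \<Rightarrow> bool" where
  "simple_X M f \<longleftrightarrow> finite (f ` space M) \<and> (\<forall>v. f -` {v} \<inter> space M \<in> sets M)"

definition simple_integral_X ::
  "('x \<Rightarrow> 'x \<Rightarrow> 'x) \<Rightarrow> (real \<Rightarrow> 'x \<Rightarrow> 'x) \<Rightarrow> 'x \<Rightarrow> ('x \<Rightarrow> 'x) \<Rightarrow> 't measure \<Rightarrow> ('t \<Rightarrow> 'x) \<Rightarrow> 'x" where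
  "simple_integral_X add smul \<theta> P M f =
     sumX add \<theta> (\<lambda>v. smul (measure M (f -` {v} \<inter> space M)) (P v)) (f ` space M)"

definition integral_limit_X ::
  "('x \<Rightarrow> 'x \<Rightarrow> 'x) \<Rightarrow> (real \<Rightarrow> 'x \<Rightarrow> 'x) \<Rightarrow> 'x \<Rightarrow> ('x \<Rightarrow> 'x \<Rightarrow> real) \<Rightarrow> ('x \<Rightarrow> 'x)
    \<Rightarrow> 't measure \<Rightarrow> ('t \<Rightarrow> 'x) \<Rightarrow> 'x \<Rightarrow> bool" where
  "integral_limit_X add smul \<theta> h P M f I \<longleftrightarrow>
     (\<forall>g :: nat \<Rightarrow> 't \<Rightarrow> 'x.
        (\<forall>n. simple_X M (g n)) \<longrightarrow>
        (\<exists>C. \<forall>n. \<forall>s\<in>space M. h (g n s) \<theta> \<le> C) \<longrightarrow>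
        (AE s in M. (\<lambda>n. h (g n s) (f s)) \<longlonglongrightarrow> 0) \<longrightarrow>
        (\<lambda>n. h (simple_integral_X add smul \<theta> P M (g n)) I) \<longlonglongrightarrow> 0)"

definition integral_X ::
  "('x \<Rightarrow> 'x \<Rightarrow> 'x) \<Rightarrow> (real \<Rightarrow> 'x \<Rightarrow> 'x) \<Rightarrow> 'x \<Rightarrow> ('x \<Rightarrow> 'x \<Rightarrow> real) \<Rightarrow> ('x \<Rightarrow> 'x)
    \<Rightarrow> 't measure \<Rightarrow> ('t \<Rightarrow> 'x) \<Rightarrow> 'x" where
  "integral_X add smul \<theta> h P M f = (THE I. integral_limit_X add smul \<theta> h P M f I)"

definition set_integral_X ::
  "('x \<Rightarrow> 'x \<Rightarrow> 'x) \<Rightarrow> (real \<Rightarrow> 'x \<Rightarrow> 'x) \<Rightarrow> 'x \<Rightarrow> ('x \<Rightarrow> 'x \<Rightarrow> real) \<Rightarrow> ('x \<Rightarrow> 'x)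
    \<Rightarrow> 't measure \<Rightarrow> 't set \<Rightarrow> ('t \<Rightarrow> 'x) \<Rightarrow> 'x" where
  "set_integral_X add smul \<theta> h P M Q f =
     integral_X add smul \<theta> h P M (\<lambda>s. if s \<in> Q then f s else \<theta>)"

definition modulus_of_continuity :: "(real \<Rightarrow> real) \<Rightarrow> bool" where
  "modulus_of_continuity \<omega> \<longleftrightarrow>
     mono_on {0..} \<omega> \<and> continuous_on {0..} \<omega> \<and> (\<forall>a\<ge>0. \<omega> a \<ge> 0) \<and> \<omega> 0 = 0 \<and>
     (\<forall>a\<ge>0. \<forall>b\<ge>0. \<omega> (a + b) \<le> \<omega> a + \<omega> b)"

definition H_omega :: "(real \<Rightarrow> real) \<Rightarrow> ('x \<Rightarrow> 'x \<Rightarrow> real) \<Rightarrow> ('t::metric_space \<Rightarrow> 'x) set" where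
  "H_omega \<omega> h = {f. \<forall>s t. h (f s) (f t) \<le> \<omega> (dist s t)}"

end

theory Submission
  imports Defs
begin

text \<open>The integral is a contraction, \<open>h(\<integral>g\<^sub>1, \<integral>g\<^sub>2) \<le> \<integral>h(g\<^sub>1, g\<^sub>2)\<close>: for simple
  functions because \<open>P\<close> is \<open>1\<close>-Lipschitz and linear and real multiples of a convex element
  can be regrouped along any refinement; in general by passing to uniform limits of simple
  functions, which exist on a compact \<open>T\<close>. Comparing \<open>f\<close> with the function equal to \<open>f(t)\<close>
  on \<open>Q\<close>, whose integral is \<open>\<mu>(Q) P(f(t))\<close>, gives
  \<open>\<mu>(Q) h(P(f(t)), \<theta>) \<le> \<integral>\<^sub>Q \<omega>(r(t,s)) d\<mu>(s)\<close> when \<open>\<integral>\<^sub>Q f = \<theta>\<close>.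
  For equality, in an isotropic space an invertible convex \<open>e\<close> with \<open>h(e,\<theta>) = 1\<close> and
  inverse \<open>e'\<close> give an isometric embedding \<open>x \<mapsto> x\<^sup>+ e + x\<^sup>- e'\<close> of \<open>\<real>\<close> on whose
  image \<open>P\<close> is the identity and the integral is the real integral. The image of
  \<open>\<omega>(r(t,\<cdot>)) - c\<close>, with \<open>c\<close> the mean of \<open>\<omega>(r(t,\<cdot>))\<close> over \<open>Q\<close>, lies in \<open>H\<^sup>\<omega>\<close>,
  has integral \<open>\<theta>\<close> over \<open>Q\<close>, and is at distance \<open>c\<close> from \<open>\<theta>\<close> at \<open>t\<close>.\<close>

lemma LIMSEQ_0_if_le:
  fixes a b :: "nat \<Rightarrow> real"
  assumes "\<And>n. a n \<le> b n" "b \<longlonglongrightarrow> 0" "\<And>n. 0 \<le> a n"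
  shows "a \<longlonglongrightarrow> 0"
proof (rule Lim_null_comparison[OF always_eventually assms(2)])
  show "\<forall>n. norm (a n) \<le> b n" using assms(1,3) by simp
qed

lemma simple_X_iff_simple_function: "simple_X M g \<longleftrightarrow> simple_function M g"
proof
  show "simple_X M g \<Longrightarrow> simple_function M g"
    by (simp add: simple_X_def simple_function_def)
  show "simple_function M g \<Longrightarrow> simple_X M g"
    by (simp add: simple_X_def simple_functionD)
qed

lemma simple_function_restrict_comp:
  assumes "simple_function M p" and "Q \<in> sets M"
  shows "simple_function M (\<lambda>s. if s \<in> Q then \<phi> (p s) else c)"
proof -
  have "{s \<in> space M. s \<in> Q} = Q" using sets.sets_into_space[OF assms(2)] by auto
  then have "{s \<in> space M. s \<in> Q} \<in> sets M" using assms(2) by simp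
  then show ?thesis
    by (rule simple_function_If[OF simple_function_compose1[OF assms(1)] simple_function_const])
qed

lemma compact_UNIV_dist_bounded:
  assumes "compact (UNIV :: 'a::metric_space set)"
  obtains B where "\<And>s. dist (t::'a) s \<le> B"
proof -
  have "bounded (UNIV :: 'a set)" by (rule compact_imp_bounded[OF assms])
  then show thesis using that unfolding bounded_any_center[of _ t] by blast
qed

lemma compact_UNIV_finite_net_map:
  assumes T: "compact (UNIV :: 'a::metric_space set)" and \<delta>: "\<delta> > 0"
  shows "\<exists>p :: 'a \<Rightarrow> 'a. simple_function borel p \<and> (\<forall>s. dist s (p s) < \<delta>)"
proof -
  have cover: "UNIV \<subseteq> (\<Union>c\<in>UNIV. ball c \<delta>)" using \<delta> by auto
  have "\<exists>K :: 'a set. finite K \<and> UNIV \<subseteq> (\<Union>c\<in>K. ball c \<delta>)"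
    by (rule compactE_image[OF T open_ball cover]) blast
  then obtain K :: "'a set" where "finite K" and K: "UNIV \<subseteq> (\<Union>c\<in>K. ball c \<delta>)" by blast
  obtain ks where ks: "set ks = K" using finite_list[OF \<open>finite K\<close>] by blast
  define idx where "idx s = (LEAST i. i < length ks \<and> dist (ks ! i) s < \<delta>)" for s
  have idx: "idx s < length ks \<and> dist (ks ! idx s) s < \<delta>" for s
  proof -
    have "s \<in> (\<Union>c\<in>K. ball c \<delta>)" using K by blast
    then obtain c where "c \<in> K" "dist c s < \<delta>" by auto
    then have "\<exists>i. i < length ks \<and> dist (ks ! i) s < \<delta>" using ks by (auto simp: in_set_conv_nth)
    then show ?thesis unfolding idx_def by (rule LeastI_ex)
  qed
  have "(\<lambda>x. x \<in> ball c \<delta>) \<in> measurable borel (count_space UNIV)" for c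
    using pred_sets2[OF borel_open[OF open_ball] measurable_ident_sets[OF refl]] .
  then have "(\<lambda>x. i < length ks \<and> dist (ks ! i) x < \<delta>) \<in> measurable borel (count_space UNIV)" for i
    by (cases "i < length ks") (simp_all add: mem_ball)
  then have idx_measurable: "idx \<in> measurable borel (count_space UNIV)"
    unfolding idx_def by (rule measurable_Least)
  define p where "p s = ks ! idx s" for s
  show ?thesis
  proof (intro exI conjI allI)
    have "p ` UNIV \<subseteq> K" using idx ks unfolding p_def by auto
    then have "finite (p ` space borel)" using \<open>finite K\<close> finite_subset by auto
    moreover have "p \<in> measurable borel (count_space UNIV)"
      unfolding p_def by (rule measurable_compose[OF idx_measurable measurable_count_space])
    ultimately show "simple_function borel p" by (simp add: simple_function_eq_measurable)
    show "dist s (p s) < \<delta>" for s using idx[of s] by (simp add: p_def dist_commute)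
  qed
qed

lemma compact_UNIV_finite_net_maps:
  assumes "compact (UNIV :: 'a::metric_space set)"
  shows "\<exists>p :: nat \<Rightarrow> 'a \<Rightarrow> 'a. \<forall>n.
    simple_function borel (p n) \<and> (\<forall>s. dist s (p n s) < inverse (real (Suc n)))"
  using compact_UNIV_finite_net_map[OF assms] by (intro choice allI) simp

lemma modulus_of_continuity_nonneg: "modulus_of_continuity \<omega> \<Longrightarrow> 0 \<le> a \<Longrightarrow> 0 \<le> \<omega> a"
  unfolding modulus_of_continuity_def by auto

lemma modulus_of_continuity_mono:
  "modulus_of_continuity \<omega> \<Longrightarrow> 0 \<le> a \<Longrightarrow> a \<le> b \<Longrightarrow> \<omega> a \<le> \<omega> b"
  unfolding modulus_of_continuity_def mono_on_def by auto

lemma modulus_of_continuity_tendsto_0: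
  assumes "modulus_of_continuity \<omega>"
  shows "(\<lambda>n. \<omega> (inverse (real (Suc n)))) \<longlonglongrightarrow> 0"
proof -
  have "continuous_on {0..} \<omega>" and "\<omega> 0 = 0"
    using assms unfolding modulus_of_continuity_def by auto
  moreover from this have "(\<lambda>n. \<omega> (inverse (real (Suc n)))) \<longlonglongrightarrow> \<omega> 0"
    by (intro continuous_on_tendsto_compose[OF _ LIMSEQ_inverse_real_of_nat]) auto
  ultimately show ?thesis by simp
qed

lemma modulus_of_continuity_abs_diff_le:
  assumes \<omega>: "modulus_of_continuity \<omega>" and "0 \<le> a" "0 \<le> b"
  shows "\<bar>\<omega> a - \<omega> b\<bar> \<le> \<omega> \<bar>a - b\<bar>"
proof -
  have "\<omega> y \<le> \<omega> x \<and> \<omega> x \<le> \<omega> y + \<omega> (x - y)" if "0 \<le> y" "y \<le> x" for x y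
    using \<omega> that modulus_of_continuity_mono[OF \<omega>, of y x]
    unfolding modulus_of_continuity_def by (metis add.commute diff_add_cancel diff_ge_0_iff_ge)
  from this[of b a] this[of a b] assms(2,3) show ?thesis by (cases "b \<le> a") auto
qed

lemma modulus_dist_abs_diff_le:
  assumes \<omega>: "modulus_of_continuity \<omega>"
  shows "\<bar>\<omega> (dist t x) - \<omega> (dist t y)\<bar> \<le> \<omega> (dist x y)"
  using modulus_of_continuity_abs_diff_le[OF \<omega>, of "dist t x" "dist t y"]
    modulus_of_continuity_mono[OF \<omega> _ abs_dist_diff_le[of x t y]]
  by (simp add: dist_commute)

lemma borel_measurable_modulus_dist:
  assumes "modulus_of_continuity \<omega>"
  shows "(\<lambda>s. \<omega> (dist t s)) \<in> borel_measurable borel"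
proof -
  have "continuous_on {0..} \<omega>" using assms unfolding modulus_of_continuity_def by simp
  then have "continuous_on UNIV (\<lambda>s. \<omega> (dist t s))"
    by (rule continuous_on_compose2) (auto intro: continuous_intros)
  then show ?thesis by (rule borel_measurable_continuous_onI)
qed

lemma H_omega_le_modulus:
  assumes "f \<in> H_omega \<omega> h" "modulus_of_continuity \<omega>" "dist s s' \<le> \<delta>"
  shows "h (f s) (f s') \<le> \<omega> \<delta>"
proof -
  have "h (f s) (f s') \<le> \<omega> (dist s s')" using assms(1) unfolding H_omega_def by blast
  also have "\<dots> \<le> \<omega> \<delta>" by (rule modulus_of_continuity_mono[OF assms(2) zero_le_dist assms(3)])
  finally show ?thesis .
qed

locale convexified_L_space =
  fixes add :: "'x \<Rightarrow> 'x \<Rightarrow> 'x" and smul :: "real \<Rightarrow> 'x \<Rightarrow> 'x" and \<theta> :: 'x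
    and h :: "'x \<Rightarrow> 'x \<Rightarrow> real" and P :: "'x \<Rightarrow> 'x"
  assumes L_space: "L_space add smul \<theta> h"
    and convexifying: "convexifying_operator add smul h P"
begin

lemma add_commute: "add x y = add y x"
  and add_assoc: "add x (add y z) = add (add x y) z"
  and add_zero_right: "add x \<theta> = x"
  and smul_add: "smul a (add x y) = add (smul a x) (smul a y)"
  and smul_smul: "smul a (smul b x) = smul (a * b) x"
  and smul_zero_left: "smul 0 x = \<theta>"
  using L_space unfolding L_space_def semilinear_space_def by blast+

lemma h_nonneg: "0 \<le> h x y"
  and h_eq_0_iff: "h x y = 0 \<longleftrightarrow> x = y"
  and h_commute: "h x y = h y x"
  and h_triangle: "h x y \<le> h x z + h z y"
  using L_space unfolding L_space_def is_metric_def by metis+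

lemma h_self [simp]: "h x x = 0"
  using h_eq_0_iff by simp

lemma h_smul: "h (smul a x) (smul a y) = \<bar>a\<bar> * h x y"
  and h_add_right_le: "h (add x z) (add y z) \<le> h x y"
  and h_complete: "metric_complete h"
  using L_space unfolding L_space_def by auto

lemma P_range: "range P = convex_elems add smul"
  and h_P_le: "h (P x) (P y) \<le> h x y"
  and P_idem: "P (P x) = P x"
  and P_linear: "P (add (smul a x) (smul b y)) = add (smul a (P x)) (smul b (P y))"
  using convexifying unfolding convexifying_operator_def by auto

lemma add_zero_left: "add \<theta> x = x"
  using add_commute add_zero_right by metis

lemma smul_zero_right: "smul a \<theta> = \<theta>"
  by (metis smul_zero_left smul_smul mult_zero_right)

lemma P_zero: "P \<theta> = \<theta>"
  using P_linear[of 0 \<theta> 0 \<theta>] by (simp add: smul_zero_left add_zero_right)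

lemma P_in_convex_elems: "P x \<in> convex_elems add smul"
  using P_range by auto

lemma P_eq_if_convex: "x \<in> convex_elems add smul \<Longrightarrow> P x = x"
  using P_range P_idem by (metis rangeE)

lemma convex_elemsD:
  "x \<in> convex_elems add smul \<Longrightarrow> 0 \<le> a \<Longrightarrow> 0 \<le> b \<Longrightarrow> smul (a + b) x = add (smul a x) (smul b x)"
  unfolding convex_elems_def by auto

lemma h_add_le: "h (add x1 x2) (add y1 y2) \<le> h x1 y1 + h x2 y2"
proof -
  have "h (add x1 x2) (add y1 x2) \<le> h x1 y1" by (rule h_add_right_le)
  moreover have "h (add y1 x2) (add y1 y2) \<le> h x2 y2"
    using h_add_right_le[of x2 y1 y2] add_commute[of y1 x2] add_commute[of y1 y2] by simp
  ultimately show ?thesis using h_triangle[of "add x1 x2" "add y1 y2" "add y1 x2"] by linarith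
qed

lemma h_smul_zero: "h (smul a x) \<theta> = \<bar>a\<bar> * h x \<theta>"
  using h_smul[of a x \<theta>] by (simp add: smul_zero_right)

lemma eq_if_h_tendsto_0:
  assumes "(\<lambda>n. h (u n) x) \<longlonglongrightarrow> 0" "(\<lambda>n. h (u n) y) \<longlonglongrightarrow> 0"
  shows "x = y"
proof -
  have "(\<lambda>n. h (u n) x + h (u n) y) \<longlonglongrightarrow> 0"
    using tendsto_add[OF assms] by simp
  moreover have "h x y \<le> h (u n) x + h (u n) y" for n
    using h_triangle[of x y "u n"] h_commute[of x "u n"] by simp
  ultimately have "h x y \<le> 0"
    using LIMSEQ_le_const by blast
  then show ?thesis using h_nonneg[of x y] h_eq_0_iff by simp
qed

sublocale X: comm_monoid_set add \<theta>
  by unfold_locales (rule add_assoc[symmetric] add_commute add_zero_left add_zero_right)+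

lemma sumX_eq_F: "finite A \<Longrightarrow> sumX add \<theta> g A = X.F g A"
  unfolding sumX_def X.eq_fold by (simp add: comp_def)

lemma smul_sum_convex:
  "x \<in> convex_elems add smul \<Longrightarrow> (\<And>i. i \<in> A \<Longrightarrow> 0 \<le> c i) \<Longrightarrow>
    smul (\<Sum>i\<in>A. c i) x = X.F (\<lambda>i. smul (c i) x) A"
proof (induction A rule: infinite_finite_induct)
  case (insert i A)
  then have "0 \<le> c i" "0 \<le> sum c A" by (auto intro: sum_nonneg)
  then have "smul (c i + sum c A) x = add (smul (c i) x) (smul (sum c A) x)"
    by (rule convex_elemsD[OF insert.prems(1)])
  with insert show ?case by simp
qed (auto simp: smul_zero_left)

lemma h_F_le_sum: "h (X.F f A) (X.F g A) \<le> (\<Sum>i\<in>A. h (f i) (g i))"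
proof (induction A rule: infinite_finite_induct)
  case (insert i A)
  then show ?case using h_add_le[of "f i" "X.F f A" "g i" "X.F g A"] by simp
qed simp_all

lemma zero_convex: "\<theta> \<in> convex_elems add smul"
  unfolding convex_elems_def by (simp add: smul_zero_right add_zero_right)

lemma add_convex:
  "x \<in> convex_elems add smul \<Longrightarrow> y \<in> convex_elems add smul \<Longrightarrow> add x y \<in> convex_elems add smul"
  unfolding convex_elems_def by (auto simp: smul_add X.assoc X.commute X.left_commute)

lemma smul_convex:
  assumes x: "x \<in> convex_elems add smul" and c: "0 \<le> c"
  shows "smul c x \<in> convex_elems add smul"
  unfolding convex_elems_def
proof (intro CollectI allI impI)
  fix a b :: real assume "0 \<le> a" "0 \<le> b"
  then have "smul (a * c + b * c) x = add (smul (a * c) x) (smul (b * c) x)"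
    using convex_elemsD[OF x] c by simp
  then show "smul (a + b) (smul c x) = add (smul a (smul c x)) (smul b (smul c x))"
    by (simp add: smul_smul distrib_right)
qed

lemma inverse_unique: "add y1 x = \<theta> \<Longrightarrow> add y2 x = \<theta> \<Longrightarrow> y1 = y2"
  by (metis X.assoc X.commute add_zero_right)

text \<open>Both sides of the convexity identity for \<open>x'\<close> are inverses of \<open>smul (a + b) x\<close>.\<close>
lemma inverse_convex:
  assumes x: "x \<in> convex_elems add smul" and inv: "add x x' = \<theta>"
  shows "x' \<in> convex_elems add smul"
  unfolding convex_elems_def
proof (intro CollectI allI impI)
  fix a b :: real assume ab: "0 \<le> a" "0 \<le> b"
  have smul_inv: "add (smul c x') (smul c x) = \<theta>" for c
    by (metis smul_add inv add_commute smul_zero_right)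
  have "add (add (smul a x') (smul b x')) (smul (a + b) x)
      = add (add (smul a x') (smul a x)) (add (smul b x') (smul b x))"
    using convex_elemsD[OF x ab] by (simp add: X.assoc X.commute X.left_commute)
  also have "\<dots> = \<theta>" by (simp add: smul_inv add_zero_right)
  finally show "smul (a + b) x' = add (smul a x') (smul b x')"
    by (rule inverse_unique[OF smul_inv])
qed

lemma h_inverse_zero:
  assumes "isotropic add h" and "add x x' = \<theta>"
  shows "h x' \<theta> = h x \<theta>"
proof -
  have "h x' \<theta> = h (add x' x) (add \<theta> x)"
    using assms(1) unfolding isotropic_def by metis
  also have "\<dots> = h \<theta> x" using assms(2) by (simp add: add_commute add_zero_right)
  finally show ?thesis by (simp add: h_commute)
qed

lemma exists_unit_convex_invertible:
  assumes "invertible_elems add \<theta> \<inter> convex_elems add smul \<noteq> {\<theta>}"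
  obtains e e' where "e \<in> convex_elems add smul" "add e e' = \<theta>" "h e \<theta> = 1"
proof -
  have "\<theta> \<in> invertible_elems add \<theta> \<inter> convex_elems add smul"
    unfolding invertible_elems_def using zero_convex add_zero_right by auto
  then obtain x x' where x: "x \<in> convex_elems add smul" "add x x' = \<theta>" "x \<noteq> \<theta>"
    using assms unfolding invertible_elems_def by blast
  then have hx: "0 < h x \<theta>" using h_nonneg[of x \<theta>] h_eq_0_iff[of x \<theta>] by linarith
  define k where "k = 1 / h x \<theta>"
  show thesis
  proof (rule that)
    show "smul k x \<in> convex_elems add smul" using smul_convex[OF x(1)] hx by (simp add: k_def)
    show "add (smul k x) (smul k x') = \<theta>" using x(2) by (simp flip: smul_add add: smul_zero_right)
    show "h (smul k x) \<theta> = 1" using hx by (simp add: h_smul_zero k_def)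
  qed
qed

lemma H_omega_bounded:
  assumes T: "compact (UNIV :: 't::metric_space set)" and \<omega>: "modulus_of_continuity \<omega>"
    and f: "(f :: 't \<Rightarrow> 'x) \<in> H_omega \<omega> h"
  obtains C where "\<And>s. h (f s) \<theta> \<le> C"
proof -
  fix s0 :: 't
  obtain B where B: "\<And>s. dist s0 s \<le> B" using compact_UNIV_dist_bounded[OF T] by blast
  have "h (f s) (f s0) \<le> \<omega> B" for s
    by (rule H_omega_le_modulus[OF f \<omega>]) (simp add: B dist_commute)
  then have "h (f s) \<theta> \<le> \<omega> B + h (f s0) \<theta>" for s
    using h_triangle[of "f s" \<theta> "f s0"] by (meson add_right_mono order_trans)
  then show thesis by (rule that)
qed

end

locale L_space_integration = convexified_L_space +
  fixes M :: "'t::metric_space measure"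
  assumes sets_M: "sets M = sets borel" and finite_measure_M: "finite_measure M"
begin

sublocale finite_measure M
  by (rule finite_measure_M)

abbreviation simple_int where
  "simple_int \<equiv> simple_integral_X add smul \<theta> P M"

lemma space_M [simp]: "space M = UNIV"
  using sets_eq_imp_space_eq[OF sets_M] by simp

lemma simple_function_M_iff_borel: "simple_function M g \<longleftrightarrow> simple_function borel g"
  by (rule simple_function_cong_algebra) (simp_all add: sets_M)

lemma simple_function_finite_range: "simple_function M g \<Longrightarrow> finite (range g)"
  using simple_functionD(1)[of M g] by simp

lemma simple_function_vimage: "simple_function M g \<Longrightarrow> g -` A \<in> sets M"
  using simple_functionD(2)[of M g A] by simp

lemma integrable_simple_function: "simple_function M f \<Longrightarrow> integrable M (f :: 't \<Rightarrow> real)"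
  by (auto intro!: integrableI_simple_bochner_integrable simple_bochner_integrable.intros)

lemma integrable_h_simple:
  assumes "simple_function M g1" "simple_function M g2"
  shows "integrable M (\<lambda>s. h (g1 s) (g2 s))"
  using simple_function_compose2[OF assms, of h] by (rule integrable_simple_function)

lemma integral_comp_simple_function:
  fixes \<psi> :: "'c \<Rightarrow> real"
  assumes key: "simple_function M key"
  shows "(\<integral>s. \<psi> (key s) \<partial>M) = (\<Sum>c\<in>range key. measure M (key -` {c}) * \<psi> c)"
proof -
  have "(\<integral>s. \<psi> (key s) \<partial>M) = (\<integral>s. (\<Sum>c\<in>range key. indicator (key -` {c}) s * \<psi> c) \<partial>M)"
  proof (rule Bochner_Integration.integral_cong[OF refl])
    fix s
    have "(\<Sum>c\<in>range key. indicator (key -` {c}) s * \<psi> c)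
        = (\<Sum>c\<in>range key. if c = key s then \<psi> c else 0)"
      by (intro sum.cong) (auto simp: indicator_def)
    then show "\<psi> (key s) = (\<Sum>c\<in>range key. indicator (key -` {c}) s * \<psi> c)"
      using simple_function_finite_range[OF key] by (simp add: sum.delta')
  qed
  also have "\<dots> = (\<Sum>c\<in>range key. \<integral>s. indicator (key -` {c}) s * \<psi> c \<partial>M)"
    using simple_function_vimage[OF key]
    by (intro Bochner_Integration.integral_sum integrable_mult_left integrable_real_indicator)
      (simp_all add: less_top[symmetric])
  also have "\<dots> = (\<Sum>c\<in>range key. measure M (key -` {c}) * \<psi> c)"
    by simp
  finally show ?thesis .
qed

text \<open>The integral of a simple function may be computed along any finer partition: the values
  of a convex element under the measures of the pieces add up by convexity.\<close>
lemma simple_int_comp: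
  assumes key: "simple_function M key" and g: "\<And>s. g s = \<phi> (key s)"
  shows "simple_int g = X.F (\<lambda>c. smul (measure M (key -` {c})) (P (\<phi> c))) (range key)"
proof -
  have fin: "finite (range key)" by (rule simple_function_finite_range[OF key])
  have range_g: "range g = \<phi> ` range key" using g by auto
  have "simple_int g = X.F (\<lambda>v. smul (measure M (g -` {v})) (P v)) (range g)"
    unfolding simple_integral_X_def using fin range_g by (simp add: sumX_eq_F)
  also have "\<dots> = X.F (\<lambda>v. X.F (\<lambda>c. smul (measure M (key -` {c})) (P (\<phi> c)))
      {c. c \<in> range key \<and> \<phi> c = v}) (\<phi> ` range key)"
    unfolding range_g
  proof (rule X.cong[OF refl])
    fix v
    let ?C = "{c. c \<in> range key \<and> \<phi> c = v}"
    have "g -` {v} = (\<Union>c\<in>?C. key -` {c})" using g by auto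
    then have "measure M (g -` {v}) = (\<Sum>c\<in>?C. measure M (key -` {c}))"
      using fin simple_function_vimage[OF key]
      by (auto intro!: finite_measure_finite_Union simp: disjoint_family_on_def)
    then have "smul (measure M (g -` {v})) (P v)
        = X.F (\<lambda>c. smul (measure M (key -` {c})) (P v)) ?C"
      using smul_sum_convex[OF P_in_convex_elems, of ?C] by simp
    also have "\<dots> = X.F (\<lambda>c. smul (measure M (key -` {c})) (P (\<phi> c))) ?C"
      by (rule X.cong) auto
    finally show "smul (measure M (g -` {v})) (P v) = \<dots>" .
  qed
  also have "\<dots> = X.F (\<lambda>c. smul (measure M (key -` {c})) (P (\<phi> c))) (range key)"
    by (rule X.image_gen[symmetric]) (rule fin)
  finally show ?thesis .
qed

lemma h_simple_int_le:
  assumes g1: "simple_function M g1" and g2: "simple_function M g2"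
  shows "h (simple_int g1) (simple_int g2) \<le> (\<integral>s. h (g1 s) (g2 s) \<partial>M)"
proof -
  let ?key = "\<lambda>s. (g1 s, g2 s)"
  let ?m = "\<lambda>c. measure M (?key -` {c})"
  have key: "simple_function M ?key" using g1 g2 by (rule simple_function_Pair)
  have "h (simple_int g1) (simple_int g2) =
      h (X.F (\<lambda>c. smul (?m c) (P (fst c))) (range ?key))
        (X.F (\<lambda>c. smul (?m c) (P (snd c))) (range ?key))"
    by (simp add: simple_int_comp[OF key, of g1 fst] simple_int_comp[OF key, of g2 snd])
  also have "\<dots> \<le> (\<Sum>c\<in>range ?key. h (smul (?m c) (P (fst c))) (smul (?m c) (P (snd c))))"
    by (rule h_F_le_sum)
  also have "\<dots> \<le> (\<Sum>c\<in>range ?key. ?m c * h (fst c) (snd c))"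
    by (intro sum_mono) (simp add: h_smul mult_left_mono h_P_le)
  also have "\<dots> = (\<integral>s. h (g1 s) (g2 s) \<partial>M)"
    using integral_comp_simple_function[OF key, of "\<lambda>c. h (fst c) (snd c)"] by simp
  finally show ?thesis .
qed

lemma h_simple_int_le_uniform:
  assumes "simple_function M g1" "simple_function M g2" "\<And>s. h (g1 s) (g2 s) \<le> B"
  shows "h (simple_int g1) (simple_int g2) \<le> measure M UNIV * B"
proof -
  have "h (simple_int g1) (simple_int g2) \<le> (\<integral>s. h (g1 s) (g2 s) \<partial>M)"
    by (rule h_simple_int_le[OF assms(1,2)])
  also have "\<dots> \<le> (\<integral>s. B \<partial>M)"
    by (intro integral_mono integrable_h_simple assms integrable_const)
  finally show ?thesis by simp
qed

lemma integral_h_simple_tendsto_0: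
  assumes g: "\<And>n. simple_function M (g n)" and g': "\<And>n. simple_function M (g' n)"
    and bounded: "\<And>n s. h (g n s) \<theta> \<le> C" and bounded': "\<And>n s. h (g' n s) \<theta> \<le> C'"
    and conv: "AE s in M. (\<lambda>n. h (g n s) (F s)) \<longlonglongrightarrow> 0"
    and conv': "AE s in M. (\<lambda>n. h (g' n s) (F s)) \<longlonglongrightarrow> 0"
  shows "(\<lambda>n. \<integral>s. h (g' n s) (g n s) \<partial>M) \<longlonglongrightarrow> 0"
proof -
  have "(\<lambda>n. \<integral>s. h (g' n s) (g n s) \<partial>M) \<longlonglongrightarrow> (\<integral>s. 0 \<partial>M)"
  proof (rule integral_dominated_convergence[where w="\<lambda>s. C' + C"])
    show "(\<lambda>s. h (g' n s) (g n s)) \<in> borel_measurable M" for n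
      using integrable_h_simple[OF g' g] by (rule borel_measurable_integrable)
    show "integrable M (\<lambda>s. C' + C)"
      by (rule integrable_const)
    have "h (g' n s) (g n s) \<le> C' + C" for n s
      using h_triangle[of "g' n s" "g n s" \<theta>] bounded[of n s] bounded'[of n s]
        h_commute[of \<theta> "g n s"]
      by linarith
    then show "AE s in M. norm (h (g' n s) (g n s)) \<le> C' + C" for n
      using h_nonneg by simp
    show "AE s in M. (\<lambda>n. h (g' n s) (g n s)) \<longlonglongrightarrow> 0"
      using conv conv'
    proof eventually_elim
      case (elim s)
      have "h (g' n s) (g n s) \<le> h (g' n s) (F s) + h (g n s) (F s)" for n
        using h_triangle[of "g' n s" "g n s" "F s"] h_commute[of "F s" "g n s"] by simp
      then show ?case using tendsto_add_zero[OF elim(2,1)] by (rule LIMSEQ_0_if_le) (rule h_nonneg)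
    qed
  qed simp
  then show ?thesis by simp
qed

lemma integral_limit_X_if_simple_approx:
  assumes g: "\<And>n. simple_function M (g n)" and bounded: "\<And>n s. h (g n s) \<theta> \<le> C"
    and conv: "AE s in M. (\<lambda>n. h (g n s) (F s)) \<longlonglongrightarrow> 0"
    and lim: "(\<lambda>n. h (simple_int (g n)) I) \<longlonglongrightarrow> 0"
  shows "integral_limit_X add smul \<theta> h P M F I"
  unfolding integral_limit_X_def simple_X_iff_simple_function
proof (intro allI impI)
  fix g'
  assume g': "\<forall>n. simple_function M (g' n)" and "\<exists>C. \<forall>n. \<forall>s\<in>space M. h (g' n s) \<theta> \<le> C"
    and conv': "AE s in M. (\<lambda>n. h (g' n s) (F s)) \<longlonglongrightarrow> 0"
  then obtain C' where C': "\<And>n s. h (g' n s) \<theta> \<le> C'" by auto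
  have "h (simple_int (g' n)) I \<le> (\<integral>s. h (g' n s) (g n s) \<partial>M) + h (simple_int (g n)) I" for n
    using h_triangle[of "simple_int (g' n)" I "simple_int (g n)"]
      h_simple_int_le[of "g' n" "g n"] g g'
    by simp
  moreover have "(\<lambda>n. (\<integral>s. h (g' n s) (g n s) \<partial>M) + h (simple_int (g n)) I) \<longlonglongrightarrow> 0"
    using integral_h_simple_tendsto_0[OF g g'[rule_format] bounded C' conv conv'] lim
    by (rule tendsto_add_zero)
  ultimately show "(\<lambda>n. h (simple_int (g' n)) I) \<longlonglongrightarrow> 0"
    by (rule LIMSEQ_0_if_le) (rule h_nonneg)
qed

lemma integral_X_eqI:
  assumes g: "\<And>n. simple_function M (g n)" and bounded: "\<And>n s. h (g n s) \<theta> \<le> C"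
    and conv: "AE s in M. (\<lambda>n. h (g n s) (F s)) \<longlonglongrightarrow> 0"
    and lim: "(\<lambda>n. h (simple_int (g n)) I) \<longlonglongrightarrow> 0"
  shows "integral_X add smul \<theta> h P M F = I"
  unfolding integral_X_def
proof (rule the_equality)
  show "integral_limit_X add smul \<theta> h P M F I"
    by (rule integral_limit_X_if_simple_approx[OF assms])
  fix I' assume "integral_limit_X add smul \<theta> h P M F I'"
  then have "(\<lambda>n. h (simple_int (g n)) I') \<longlonglongrightarrow> 0"
    using g bounded conv unfolding integral_limit_X_def simple_X_iff_simple_function by auto
  then show "I' = I" using lim by (rule eq_if_h_tendsto_0)
qed

lemma simple_int_Cauchy:
  assumes g: "\<And>n. simple_function M (g n)"
    and uniform: "\<And>n s. h (g n s) (F s) \<le> e n" and e: "e \<longlonglongrightarrow> 0" and \<epsilon>: "0 < \<epsilon>"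
  shows "\<exists>N. \<forall>m\<ge>N. \<forall>n\<ge>N. h (simple_int (g m)) (simple_int (g n)) < \<epsilon>"
proof -
  have "(\<lambda>n. measure M UNIV * e n) \<longlonglongrightarrow> 0" by (rule tendsto_mult_right_zero[OF e])
  then obtain N where N: "\<And>n. N \<le> n \<Longrightarrow> measure M UNIV * e n < \<epsilon> / 2"
    using order_tendstoD(2)[of _ 0 sequentially "\<epsilon> / 2"] \<epsilon> by (auto simp: eventually_sequentially)
  have "h (simple_int (g m)) (simple_int (g n)) < \<epsilon>" if "N \<le> m" "N \<le> n" for m n
  proof -
    have "h (g m s) (g n s) \<le> e m + e n" for s
      using h_triangle[of "g m s" "g n s" "F s"] uniform[of m s] uniform[of n s]
        h_commute[of "F s" "g n s"] by simp
    then have "h (simple_int (g m)) (simple_int (g n)) \<le> measure M UNIV * (e m + e n)"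
      by (rule h_simple_int_le_uniform[OF g g])
    also have "\<dots> < \<epsilon>" using N[OF that(1)] N[OF that(2)] by (simp add: distrib_left)
    finally show ?thesis .
  qed
  then show ?thesis by blast
qed

lemma simple_int_tendsto_integral_X:
  assumes g: "\<And>n. simple_function M (g n)" and bounded: "\<And>n s. h (g n s) \<theta> \<le> C"
    and uniform: "\<And>n s. h (g n s) (F s) \<le> e n" and e: "e \<longlonglongrightarrow> 0"
  shows "(\<lambda>n. h (simple_int (g n)) (integral_X add smul \<theta> h P M F)) \<longlonglongrightarrow> 0"
proof -
  have "\<exists>I. (\<lambda>n. h (simple_int (g n)) I) \<longlonglongrightarrow> 0"
    using h_complete[unfolded metric_complete_def, rule_format, OF simple_int_Cauchy[OF g uniform e]] .
  then obtain I where I: "(\<lambda>n. h (simple_int (g n)) I) \<longlonglongrightarrow> 0" ..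
  have "AE s in M. (\<lambda>n. h (g n s) (F s)) \<longlonglongrightarrow> 0"
    by (rule AE_I2, rule LIMSEQ_0_if_le[OF uniform e h_nonneg])
  then have "integral_X add smul \<theta> h P M F = I" by (rule integral_X_eqI[OF g bounded _ I])
  with I show ?thesis by simp
qed

lemma set_integral_X_as_limit:
  assumes T: "compact (UNIV :: 't set)" and \<omega>: "modulus_of_continuity \<omega>"
    and f: "f \<in> H_omega \<omega> h" and Q: "Q \<in> sets M"
  obtains p where "\<And>n. simple_function M (p n)" "\<And>n s. dist s (p n s) < inverse (real (Suc n))"
    "(\<lambda>n. h (simple_int (\<lambda>s. if s \<in> Q then f (p n s) else \<theta>)) (set_integral_X add smul \<theta> h P M Q f))
       \<longlonglongrightarrow> 0"
proof -
  obtain p :: "nat \<Rightarrow> 't \<Rightarrow> 't"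
    where p: "\<forall>n. simple_function borel (p n) \<and> (\<forall>s. dist s (p n s) < inverse (real (Suc n)))"
    using compact_UNIV_finite_net_maps[OF T] by blast
  then have p_simple: "simple_function M (p n)" for n by (simp add: simple_function_M_iff_borel)
  have p_dist: "dist s (p n s) < inverse (real (Suc n))" for n s using p by blast
  obtain C where C: "\<And>s. h (f s) \<theta> \<le> C" using H_omega_bounded[OF T \<omega> f] by blast
  define g where "g n s = (if s \<in> Q then f (p n s) else \<theta>)" for n s
  have g_simple: "simple_function M (g n)" for n
    unfolding g_def by (rule simple_function_restrict_comp[OF p_simple Q])
  have g_bounded: "h (g n s) \<theta> \<le> max C 0" for n s
    using C[of "p n s"] by (simp add: g_def le_max_iff_disj)
  have g_close: "h (g n s) (if s \<in> Q then f s else \<theta>) \<le> \<omega> (inverse (real (Suc n)))" for n s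
    using H_omega_le_modulus[OF f \<omega>, of "p n s" s] p_dist[of s n]
      modulus_of_continuity_nonneg[OF \<omega>, of "inverse (real (Suc n))"]
    by (auto simp: g_def dist_commute)
  have "(\<lambda>n. h (simple_int (g n)) (set_integral_X add smul \<theta> h P M Q f)) \<longlonglongrightarrow> 0"
    unfolding set_integral_X_def
    by (rule simple_int_tendsto_integral_X[OF g_simple g_bounded g_close
          modulus_of_continuity_tendsto_0[OF \<omega>]])
  then show thesis unfolding g_def by (rule that[OF p_simple p_dist])
qed

lemma integrable_modulus_dist:
  assumes T: "compact (UNIV :: 't set)" and \<omega>: "modulus_of_continuity \<omega>"
  shows "integrable M (\<lambda>s. \<omega> (dist t s))"
proof -
  obtain B where B: "\<And>s. dist t s \<le> B" using compact_UNIV_dist_bounded[OF T] by blast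
  show ?thesis
  proof (rule integrable_const_bound[where B = "\<omega> B"])
    show "AE s in M. norm (\<omega> (dist t s)) \<le> \<omega> B"
      using modulus_of_continuity_nonneg[OF \<omega>] modulus_of_continuity_mono[OF \<omega> _ B] by simp
    show "(\<lambda>s. \<omega> (dist t s)) \<in> borel_measurable M"
      by (subst measurable_cong_sets[OF sets_M refl]) (rule borel_measurable_modulus_dist[OF \<omega>])
  qed
qed

lemma integrable_and_integral_minus_mean:
  fixes w :: "'t \<Rightarrow> real"
  assumes Q: "Q \<in> sets M" and Q_pos: "0 < measure M Q"
    and w: "integrable M (\<lambda>s. indicator Q s * w s)"
  defines "c \<equiv> (LINT s:Q|M. w s) / measure M Q"
  shows "integrable M (\<lambda>s. indicator Q s * (w s - c))"
    and "(\<integral>s. indicator Q s * (w s - c) \<partial>M) = 0"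
proof -
  have const: "integrable M (\<lambda>s. indicator Q s * c)"
    using Q by (simp add: less_top[symmetric])
  show "integrable M (\<lambda>s. indicator Q s * (w s - c))"
    unfolding right_diff_distrib by (rule Bochner_Integration.integrable_diff[OF w const])
  have "(\<integral>s. indicator Q s * (w s - c) \<partial>M)
      = (\<integral>s. indicator Q s * w s \<partial>M) - (\<integral>s. indicator Q s * c \<partial>M)"
    unfolding right_diff_distrib by (rule Bochner_Integration.integral_diff[OF w const])
  then show "(\<integral>s. indicator Q s * (w s - c) \<partial>M) = 0"
    using Q_pos by (simp add: c_def set_lebesgue_integral_def)
qed

lemma abs_integral_restrict_comp_diff_le:
  fixes u :: "'t \<Rightarrow> real"
  assumes Q: "Q \<in> sets M" and p: "simple_function M p"
    and u: "integrable M (\<lambda>s. indicator Q s * u s)" and close: "\<And>s. \<bar>u (p s) - u s\<bar> \<le> d"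
  shows "\<bar>(\<integral>s. (if s \<in> Q then u (p s) else 0) \<partial>M) - (\<integral>s. indicator Q s * u s \<partial>M)\<bar>
    \<le> measure M UNIV * d"
proof -
  let ?v = "\<lambda>s. if s \<in> Q then u (p s) else 0"
  have v: "integrable M ?v"
    by (rule integrable_simple_function[OF simple_function_restrict_comp[OF p Q]])
  have "\<bar>(\<integral>s. ?v s \<partial>M) - (\<integral>s. indicator Q s * u s \<partial>M)\<bar> = \<bar>\<integral>s. ?v s - indicator Q s * u s \<partial>M\<bar>"
    by (simp add: Bochner_Integration.integral_diff[OF v u])
  also have "\<dots> \<le> (\<integral>s. \<bar>?v s - indicator Q s * u s\<bar> \<partial>M)"
    by (rule integral_abs_bound)
  also have "\<dots> \<le> (\<integral>s. d \<partial>M)"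
  proof (rule integral_mono)
    show "integrable M (\<lambda>s. \<bar>?v s - indicator Q s * u s\<bar>)"
      by (intro integrable_abs Bochner_Integration.integrable_diff v u)
    show "integrable M (\<lambda>s. d)" by (rule integrable_const)
    show "\<bar>?v s - indicator Q s * u s\<bar> \<le> d" for s
      using close[of s] by (cases "s \<in> Q") auto
  qed
  finally show ?thesis by simp
qed

lemma simple_int_restrict_const:
  assumes Q: "Q \<in> sets M"
  shows "simple_int (\<lambda>s. if s \<in> Q then x else \<theta>) = smul (measure M Q) (P x)"
proof -
  let ?key = "\<lambda>s. s \<in> Q"
  let ?term = "\<lambda>b. smul (measure M (?key -` {b})) (P (if b then x else \<theta>))"
  have key: "simple_function M ?key"
  proof -
    have "?key -` {b} = (if b then Q else space M - Q)" for b by auto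
    then show ?thesis using Q sets.compl_sets[OF Q] unfolding simple_function_def by auto
  qed
  have "simple_int (\<lambda>s. if s \<in> Q then x else \<theta>) = X.F ?term (range ?key)"
    by (rule simple_int_comp[OF key]) simp
  also have "\<dots> = X.F ?term UNIV"
  proof (rule X.mono_neutral_left)
    show "\<forall>b\<in>UNIV - range ?key. ?term b = \<theta>"
    proof
      fix b assume "b \<in> UNIV - range ?key"
      then have "?key -` {b} = {}" by auto
      then show "?term b = \<theta>" by (simp add: smul_zero_left)
    qed
  qed simp_all
  also have "\<dots> = smul (measure M Q) (P x)"
    by (simp add: UNIV_bool vimage_def P_zero smul_zero_right add_zero_right add_zero_left)
  finally show ?thesis .
qed

lemma h_simple_int_restrict_le:
  assumes T: "compact (UNIV :: 't set)" and \<omega>: "modulus_of_continuity \<omega>"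
    and f: "f \<in> H_omega \<omega> h" and Q: "Q \<in> sets M"
    and p: "simple_function M p" and p_dist: "\<And>s. dist s (p s) \<le> \<delta>"
  shows "h (simple_int (\<lambda>s. if s \<in> Q then f t else \<theta>))
      (simple_int (\<lambda>s. if s \<in> Q then f (p s) else \<theta>))
    \<le> (LINT s:Q|M. \<omega> (dist t s)) + \<omega> \<delta> * measure M Q"
    (is "h (simple_int ?G) (simple_int ?g) \<le> _")
proof -
  have G: "simple_function M ?G" by (rule simple_function_restrict_comp[OF simple_function_const Q])
  have g: "simple_function M ?g" by (rule simple_function_restrict_comp[OF p Q])
  have integrable: "integrable M (\<lambda>s. indicator Q s *\<^sub>R \<omega> (dist t s))"
    by (rule integrable_mult_indicator[OF Q integrable_modulus_dist[OF T \<omega>]])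
  have "h (simple_int ?G) (simple_int ?g) \<le> (\<integral>s. h (?G s) (?g s) \<partial>M)"
    by (rule h_simple_int_le[OF G g])
  also have "\<dots> \<le> (\<integral>s. indicator Q s *\<^sub>R \<omega> (dist t s) + indicator Q s * \<omega> \<delta> \<partial>M)"
  proof (rule integral_mono[OF integrable_h_simple[OF G g]])
    show "integrable M (\<lambda>s. indicator Q s *\<^sub>R \<omega> (dist t s) + indicator Q s * \<omega> \<delta>)"
      using integrable Q
      by (simp add: less_top[symmetric])
    show "h (?G s) (?g s) \<le> indicator Q s *\<^sub>R \<omega> (dist t s) + indicator Q s * \<omega> \<delta>" for s
    proof (cases "s \<in> Q")
      case True
      have "h (f t) (f (p s)) \<le> h (f t) (f s) + h (f s) (f (p s))" by (rule h_triangle)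
      also have "\<dots> \<le> \<omega> (dist t s) + \<omega> \<delta>"
        by (intro add_mono H_omega_le_modulus[OF f \<omega>] order_refl p_dist)
      finally show ?thesis using True by simp
    qed simp
  qed
  also have "\<dots> = (LINT s:Q|M. \<omega> (dist t s)) + \<omega> \<delta> * measure M Q"
    using integrable Q
    by (simp add: set_lebesgue_integral_def less_top[symmetric])
  finally show ?thesis .
qed

lemma h_P_le_mean_modulus:
  assumes T: "compact (UNIV :: 't set)" and \<omega>: "modulus_of_continuity \<omega>"
    and Q: "Q \<in> sets M" and Q_pos: "0 < measure M Q"
    and f: "f \<in> H_omega \<omega> h" and zero_integral: "set_integral_X add smul \<theta> h P M Q f = \<theta>"
  shows "h (P (f t)) \<theta> \<le> (LINT s:Q|M. \<omega> (dist t s)) / measure M Q"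
proof -
  define L where "L = (LINT s:Q|M. \<omega> (dist t s))"
  define G where "G = simple_int (\<lambda>s. if s \<in> Q then f t else \<theta>)"
  obtain p where p_simple: "\<And>n. simple_function M (p n)"
    and p_dist: "\<And>n s. dist s (p n s) < inverse (real (Suc n))"
    and lim: "(\<lambda>n. h (simple_int (\<lambda>s. if s \<in> Q then f (p n s) else \<theta>)) \<theta>) \<longlonglongrightarrow> 0"
    using set_integral_X_as_limit[OF T \<omega> f Q] unfolding zero_integral by blast
  let ?g = "\<lambda>n. simple_int (\<lambda>s. if s \<in> Q then f (p n s) else \<theta>)"
  have "h G \<theta> \<le> L + \<omega> (inverse (real (Suc n))) * measure M Q + h (?g n) \<theta>" for n
    using h_triangle[of G \<theta> "?g n"]
      h_simple_int_restrict_le[OF T \<omega> f Q p_simple less_imp_le[OF p_dist], of t n]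
    unfolding G_def L_def by linarith
  moreover have "(\<lambda>n. L + \<omega> (inverse (real (Suc n))) * measure M Q + h (?g n) \<theta>)
      \<longlonglongrightarrow> L + 0 * measure M Q + 0"
    by (intro tendsto_intros modulus_of_continuity_tendsto_0[OF \<omega>] lim)
  ultimately have "h G \<theta> \<le> L"
    using LIMSEQ_le_const by fastforce
  moreover have "h G \<theta> = measure M Q * h (P (f t)) \<theta>"
    unfolding G_def simple_int_restrict_const[OF Q] by (simp add: h_smul_zero)
  ultimately show ?thesis
    using Q_pos by (simp add: L_def pos_le_divide_eq mult.commute)
qed

lemma SUP_h_P_le_mean_modulus:
  assumes T: "compact (UNIV :: 't set)" and \<omega>: "modulus_of_continuity \<omega>"
    and Q: "Q \<in> sets M" and Q_pos: "0 < measure M Q"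
  shows "(SUP f \<in> {f \<in> H_omega \<omega> h. set_integral_X add smul \<theta> h P M Q f = \<theta>}. ereal (h (P (f t)) \<theta>))
    \<le> ereal ((LINT s:Q|M. \<omega> (dist t s)) / measure M Q)"
  using h_P_le_mean_modulus[OF T \<omega> Q Q_pos] by (intro SUP_least) simp

end

locale L_space_real_line = convexified_L_space +
  fixes e e'
  assumes isotropic: "isotropic add h" and e_convex: "e \<in> convex_elems add smul"
    and e_inverse: "add e e' = \<theta>" and h_e: "h e \<theta> = 1"
begin

definition line where
  "line x = add (smul (max x 0) e) (smul (max (- x) 0) e')"

lemma e'_convex: "e' \<in> convex_elems add smul"
  by (rule inverse_convex[OF e_convex e_inverse])

lemma h_e': "h e' \<theta> = 1"
  using h_inverse_zero[OF isotropic e_inverse] h_e by simp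

lemma line_zero: "line 0 = \<theta>"
  unfolding line_def by (simp add: smul_zero_left add_zero_right)

text \<open>The positive parts of \<open>x\<close>, \<open>y\<close> exceed that of \<open>x + y\<close> by the same amount \<open>d\<close> as the
  negative parts do, and \<open>smul d e\<close> cancels against \<open>smul d e'\<close>.\<close>
lemma line_add: "line (x + y) = add (line x) (line y)"
proof -
  define d where "d = max x 0 + max y 0 - max (x + y) 0"
  have d: "0 \<le> d" "max (- x) 0 + max (- y) 0 = max (- (x + y)) 0 + d" unfolding d_def by auto
  have pos: "smul (max x 0 + max y 0) e = add (smul (max (x + y) 0) e) (smul d e)"
    using convex_elemsD[OF e_convex, of "max (x + y) 0" d] d(1) unfolding d_def by simp
  have neg: "smul (max (- x) 0 + max (- y) 0) e' = add (smul (max (- (x + y)) 0) e') (smul d e')"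
    using convex_elemsD[OF e'_convex, of "max (- (x + y)) 0" d] d by simp
  have "add (line x) (line y)
      = add (smul (max x 0 + max y 0) e) (smul (max (- x) 0 + max (- y) 0) e')"
    unfolding line_def
    using convex_elemsD[OF e_convex, of "max x 0" "max y 0"]
      convex_elemsD[OF e'_convex, of "max (- x) 0" "max (- y) 0"]
    by (simp add: X.assoc X.commute X.left_commute)
  also have "\<dots> = add (line (x + y)) (smul d (add e e'))"
    unfolding pos neg line_def smul_add by (simp add: X.assoc X.commute X.left_commute)
  also have "\<dots> = line (x + y)" by (simp add: e_inverse smul_zero_right add_zero_right)
  finally show ?thesis by simp
qed

lemma h_line_zero: "h (line x) \<theta> = \<bar>x\<bar>"
proof (cases "0 \<le> x")
  case True
  then have "line x = smul x e" unfolding line_def by (simp add: smul_zero_left add_zero_right)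
  then show ?thesis using h_smul_zero h_e True by simp
next
  case False
  then have "line x = smul (- x) e'" unfolding line_def by (simp add: smul_zero_left add_zero_left)
  then show ?thesis using h_smul_zero h_e' False by simp
qed

lemma h_line: "h (line x) (line y) = \<bar>x - y\<bar>"
proof -
  have "h (line x) (line y) = h (add (line x) (line (- y))) (add (line y) (line (- y)))"
    using isotropic unfolding isotropic_def by simp
  also have "\<dots> = h (line (x - y)) \<theta>" by (simp flip: line_add add: line_zero)
  finally show ?thesis by (simp add: h_line_zero)
qed

lemma line_comp_H_omega: "(\<And>x y. \<bar>u x - u y\<bar> \<le> \<omega> (dist x y)) \<Longrightarrow> (\<lambda>s. line (u s)) \<in> H_omega \<omega> h"
  unfolding H_omega_def by (simp add: h_line)

lemma P_line: "P (line x) = line x"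
  unfolding line_def by (intro P_eq_if_convex add_convex smul_convex e_convex e'_convex) auto

lemma smul_line:
  assumes "0 \<le> c"
  shows "smul c (line x) = line (c * x)"
proof -
  have "c * max x 0 = max (c * x) 0" "c * max (- x) 0 = max (- (c * x)) 0"
    using assms by (simp_all add: max_mult_distrib_left)
  then show ?thesis unfolding line_def smul_add by (simp add: smul_smul)
qed

lemma F_line: "X.F (\<lambda>i. line (w i)) A = line (\<Sum>i\<in>A. w i)"
  by (induction A rule: infinite_finite_induct) (simp_all add: line_zero line_add)

end

locale L_space_integration_line =
  L_space_integration add smul \<theta> h P M + L_space_real_line add smul \<theta> h P e e'
  for add :: "'x \<Rightarrow> 'x \<Rightarrow> 'x" and smul \<theta> h P and M :: "'t::metric_space measure" and e e'
begin

lemma simple_int_line: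
  assumes b: "simple_function M b"
  shows "simple_int (\<lambda>s. line (b s)) = line (\<integral>s. b s \<partial>M)"
proof -
  have "simple_int (\<lambda>s. line (b s)) = X.F (\<lambda>c. smul (measure M (b -` {c})) (P (line c))) (range b)"
    by (rule simple_int_comp[OF b]) simp
  also have "\<dots> = X.F (\<lambda>c. line (measure M (b -` {c}) * c)) (range b)"
    by (simp add: P_line smul_line)
  also have "\<dots> = line (\<Sum>c\<in>range b. measure M (b -` {c}) * c)"
    by (rule F_line)
  also have "\<dots> = line (\<integral>s. b s \<partial>M)"
    using integral_comp_simple_function[OF b, of "\<lambda>c. c"] by simp
  finally show ?thesis .
qed

lemma set_integral_X_line:
  assumes T: "compact (UNIV :: 't set)" and \<omega>: "modulus_of_continuity \<omega>"
    and u: "\<And>x y. \<bar>u x - u y\<bar> \<le> \<omega> (dist x y)"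
    and Q: "Q \<in> sets M" and u_integrable: "integrable M (\<lambda>s. indicator Q s * u s)"
  shows "set_integral_X add smul \<theta> h P M Q (\<lambda>s. line (u s)) = line (\<integral>s. indicator Q s * u s \<partial>M)"
proof -
  let ?I = "line (\<integral>s. indicator Q s * u s \<partial>M)"
  obtain p where p_simple: "\<And>n. simple_function M (p n)"
    and p_dist: "\<And>n s. dist s (p n s) < inverse (real (Suc n))"
    and lim: "(\<lambda>n. h (simple_int (\<lambda>s. if s \<in> Q then line (u (p n s)) else \<theta>))
        (set_integral_X add smul \<theta> h P M Q (\<lambda>s. line (u s)))) \<longlonglongrightarrow> 0"
    using set_integral_X_as_limit[OF T \<omega> line_comp_H_omega[where u = u and \<omega> = \<omega>, OF u] Q]
    by blast
  have "h (simple_int (\<lambda>s. if s \<in> Q then line (u (p n s)) else \<theta>)) ?I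
      \<le> measure M UNIV * \<omega> (inverse (real (Suc n)))" for n
  proof -
    have "(\<lambda>s. if s \<in> Q then line (u (p n s)) else \<theta>) = (\<lambda>s. line (if s \<in> Q then u (p n s) else 0))"
      by (auto simp: line_zero)
    moreover have "\<bar>u (p n s) - u s\<bar> \<le> \<omega> (inverse (real (Suc n)))" for s
      using u[of "p n s" s] modulus_of_continuity_mono[OF \<omega> _ less_imp_le[OF p_dist[of s n]]]
      by (simp add: dist_commute)
    ultimately show ?thesis
      using abs_integral_restrict_comp_diff_le[OF Q p_simple u_integrable]
      by (simp add: simple_int_line simple_function_restrict_comp[OF p_simple Q] h_line)
  qed
  then have "(\<lambda>n. h (simple_int (\<lambda>s. if s \<in> Q then line (u (p n s)) else \<theta>)) ?I) \<longlonglongrightarrow> 0"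
    using tendsto_mult_right_zero[OF modulus_of_continuity_tendsto_0[OF \<omega>]]
    by (rule LIMSEQ_0_if_le) (rule h_nonneg)
  with lim show ?thesis by (rule eq_if_h_tendsto_0)
qed

text \<open>The extremal function is the line through \<open>\<omega>(r(t,\<cdot>))\<close> shifted by its mean over \<open>Q\<close>.\<close>
lemma exists_H_omega_attaining_mean_modulus:
  assumes T: "compact (UNIV :: 't set)" and \<omega>: "modulus_of_continuity \<omega>"
    and Q: "Q \<in> sets M" and Q_pos: "0 < measure M Q"
  shows "\<exists>f\<in>H_omega \<omega> h. set_integral_X add smul \<theta> h P M Q f = \<theta> \<and>
    h (P (f t)) \<theta> = (LINT s:Q|M. \<omega> (dist t s)) / measure M Q"
proof -
  define c where "c = (LINT s:Q|M. \<omega> (dist t s)) / measure M Q"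
  define u where "u s = \<omega> (dist t s) - c" for s
  have u: "\<bar>u x - u y\<bar> \<le> \<omega> (dist x y)" for x y
    unfolding u_def using modulus_dist_abs_diff_le[OF \<omega>] by simp
  have "integrable M (\<lambda>s. indicator Q s * \<omega> (dist t s))"
    using integrable_mult_indicator[OF Q integrable_modulus_dist[OF T \<omega>]] by simp
  note mean = integrable_and_integral_minus_mean[OF Q Q_pos this, folded c_def u_def]
  have "set_integral_X add smul \<theta> h P M Q (\<lambda>s. line (u s)) = \<theta>"
    using set_integral_X_line[OF T \<omega> u Q mean(1)] by (simp add: mean(2) line_zero)
  moreover have "h (P (line (u t))) \<theta> = c"
  proof -
    have "0 \<le> c"
      unfolding c_def set_lebesgue_integral_def using Q_pos modulus_of_continuity_nonneg[OF \<omega>]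
      by (simp add: indicator_def)
    moreover have "\<omega> (dist t t) = 0" using \<omega> unfolding modulus_of_continuity_def by simp
    ultimately show ?thesis by (simp add: u_def P_line h_line_zero)
  qed
  ultimately show ?thesis
    using line_comp_H_omega[where u = u and \<omega> = \<omega>, OF u] unfolding c_def by blast
qed

end

context L_space_integration
begin

lemma SUP_h_P_eq_mean_modulus:
  assumes T: "compact (UNIV :: 't set)" and \<omega>: "modulus_of_continuity \<omega>"
    and Q: "Q \<in> sets M" and Q_pos: "0 < measure M Q"
    and isotropic: "isotropic add h"
    and nontrivial: "invertible_elems add \<theta> \<inter> convex_elems add smul \<noteq> {\<theta>}"
  shows "(SUP f \<in> {f \<in> H_omega \<omega> h. set_integral_X add smul \<theta> h P M Q f = \<theta>}. ereal (h (P (f t)) \<theta>))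
    = ereal ((LINT s:Q|M. \<omega> (dist t s)) / measure M Q)"
    (is "?S = ereal ?R")
proof (rule antisym[OF SUP_h_P_le_mean_modulus[OF T \<omega> Q Q_pos]])
  obtain e e' where e: "e \<in> convex_elems add smul" "add e e' = \<theta>" "h e \<theta> = 1"
    using exists_unit_convex_invertible[OF nontrivial] by blast
  interpret L_space_integration_line add smul \<theta> h P M e e'
    by (intro L_space_integration_line.intro L_space_real_line.intro L_space_real_line_axioms.intro
        L_space_integration_axioms convexified_L_space_axioms isotropic e)
  obtain f where "f \<in> H_omega \<omega> h" "set_integral_X add smul \<theta> h P M Q f = \<theta>" "h (P (f t)) \<theta> = ?R"
    using exists_H_omega_attaining_mean_modulus[OF T \<omega> Q Q_pos] by blast
  then show "ereal ?R \<le> ?S" by (intro SUP_upper2[of f]) simp_all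
qed

end

theorem corollary2:
  fixes add :: "'x \<Rightarrow> 'x \<Rightarrow> 'x" and smul :: "real \<Rightarrow> 'x \<Rightarrow> 'x" and \<theta> :: 'x
    and h :: "'x \<Rightarrow> 'x \<Rightarrow> real" and P :: "'x \<Rightarrow> 'x"
    and M :: "'t::metric_space measure" and \<omega> :: "real \<Rightarrow> real"
    and t :: 't and Q :: "'t set"
  assumes X: "L_space add smul \<theta> h"
    and P: "convexifying_operator add smul h P"
    and T: "compact (UNIV :: 't set)"
    and M_borel: "sets M = sets borel" and M_fin: "finite_measure M"
    and \<omega>: "modulus_of_continuity \<omega>"
    and Q: "compact Q" and Qpos: "measure M Q > 0"
  shows "((SUP f \<in> {f \<in> H_omega \<omega> h. set_integral_X add smul \<theta> h P M Q f = \<theta>}.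
            ereal (h (P (f t)) \<theta>))
         \<le> ereal ((LINT s:Q|M. \<omega> (dist t s)) / measure M Q))
    \<and> (isotropic add h \<and> invertible_elems add \<theta> \<inter> convex_elems add smul \<noteq> {\<theta>} \<longrightarrow>
         (SUP f \<in> {f \<in> H_omega \<omega> h. set_integral_X add smul \<theta> h P M Q f = \<theta>}.
            ereal (h (P (f t)) \<theta>))
         = ereal ((LINT s:Q|M. \<omega> (dist t s)) / measure M Q))"
proof -
  interpret L_space_integration add smul \<theta> h P M
    by (intro L_space_integration.intro convexified_L_space.intro L_space_integration_axioms.intro
        X P M_borel M_fin)
  have Q_sets: "Q \<in> sets M" using M_borel borel_compact[OF Q] by simp
  show ?thesis
    using SUP_h_P_le_mean_modulus[OF T \<omega> Q_sets Qpos] SUP_h_P_eq_mean_modulus[OF T \<omega> Q_sets Qpos]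
    by blast
qed

end
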